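(* Let $\mathcal S$ be a finite set, let $0<\lambda<1$, and let $N_1,\dots,N_t$ be row-stochastic matrices indexed by $\mathcal S\times\mathcal S$ with $\|N_k\|\le\lambda$ for all $k$. Let $\boldsymbol\delta\in\mathbb R^{\mathcal S\times\mathcal S}$ satisfy $\sum_{s}\boldsymbol\delta(s)=0$ and $\|\boldsymbol\delta\|_1=2\delta$ for a scalar $\delta>0$, and let $S^*\subseteq\mathcal S\times\mathcal S$ satisfy $\sum_{s\in S^*}\boldsymbol\delta(s)=\delta$. Suppose $\hat M_k=N_k+\mathbf 1\boldsymbol\delta^T$ is row-stochastic for each $k$. Put $\hat M=\hat M_1\hat M_2\cdots\hat M_t$, $N=N_1N_2\cdots N_t$ and $E=\hat M-N$. Then all rows of $E$ are equal, and in each row the entries in the columns indexed by $S^*$ sum to at least $\lambda'\delta$, where $\lambda'=1-\frac{\lambda}{1-\lambda}$.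
   Context: For a real square matrix $M$, $\|M\|=\max_{x\neq 0,\ x\perp\mathbf 1}\|x^TM\|_1/\|x\|_1$, where $\mathbf 1$ is the all-ones vector. In the application, $N_k=M_{e_k,i}\otimes M_{e_k,j}$ is the tensor (Kronecker) product of the transition matrices of two characters $i,j$ on the $k$-th edge of a root-to-leaf path, i.e. $(M_{e,i}\otimes M_{e,j})_{(a,b),(a',b')}=M_{e,i}(a,a')M_{e,j}(b,b')$, and $\hat M_k$ is the joint transition matrix of the dependent pair. *)

theory Defs
  imports "HOL-Analysis.Analysis"
begin

definition l1 :: "real ^ 'n::finite \<Rightarrow> real" where
  "l1 x = (\<Sum>i\<in>UNIV. \<bar>x $ i\<bar>)"

definition row_stochastic :: "real ^ 'n::finite ^ 'n \<Rightarrow> bool" where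
  "row_stochastic M \<longleftrightarrow> (\<forall>i j. 0 \<le> M $ i $ j) \<and> (\<forall>i. (\<Sum>j\<in>UNIV. M $ i $ j) = 1)"

definition contr_norm :: "real ^ 'n::finite ^ 'n \<Rightarrow> real" where
  "contr_norm M = Sup {l1 (x v* M) / l1 x | x. x \<noteq> 0 \<and> (\<Sum>i\<in>UNIV. x $ i) = 0}"

fun mat_prod :: "(nat \<Rightarrow> real ^ 'n::finite ^ 'n) \<Rightarrow> nat \<Rightarrow> real ^ 'n ^ 'n" where
  "mat_prod M 0 = mat 1"
| "mat_prod M (Suc n) = mat_prod M n ** M (Suc n)"

end

theory Submission
  imports Defs
begin

text \<open>
  Write \<open>\<^bold>1 dv\<^sup>T\<close> for the rank-one perturbation with all rows equal to \<open>dv\<close>.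
  Since every prefix product of the \<open>Mhat k\<close> is row-stochastic, multiplying it by
  \<open>N k + \<^bold>1 dv\<^sup>T\<close> adds exactly \<open>\<^bold>1 dv\<^sup>T\<close>; hence by induction every row of
  \<open>Mhat\<^sub>1\<cdots>Mhat\<^sub>n - N\<^sub>1\<cdots>N\<^sub>n\<close> equals the error vector \<open>e\<^sub>n\<close> defined by
  \<open>e\<^sub>0 = 0\<close>, \<open>e\<^sub>n\<^sub>+\<^sub>1 = e\<^sub>n N\<^sub>n\<^sub>+\<^sub>1 + dv\<close>.
  The vectors \<open>e\<^sub>n\<close> sum to zero, so the contraction hypothesis \<open>\<parallel>N\<^sub>k\<parallel> \<le> \<lambda>\<close> gives
  \<open>|e\<^sub>n N\<^sub>n\<^sub>+\<^sub>1|\<^sub>1 \<le> \<lambda> |e\<^sub>n|\<^sub>1\<close> and therefore the geometric bound \<open>|e\<^sub>n|\<^sub>1 \<le> |dv|\<^sub>1/(1-\<lambda>)\<close>.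
  Finally a zero-sum vector \<open>y\<close> has mass at least \<open>-|y|\<^sub>1/2\<close> on any set of coordinates,
  so the \<open>S*\<close>-mass of \<open>e\<^sub>n\<^sub>+\<^sub>1\<close> is at least \<open>\<delta> - \<lambda>|dv|\<^sub>1/(2(1-\<lambda>)) = (1 - \<lambda>/(1-\<lambda>))\<delta>\<close>.
\<close>

lemma l1_nonneg: "0 \<le> l1 (x :: real ^ 'n::finite)"
  unfolding l1_def by (simp add: sum_nonneg)

lemma l1_triangle: "l1 (x + y) \<le> l1 x + l1 (y :: real ^ 'n::finite)"
  unfolding l1_def by (simp add: sum.distrib[symmetric] sum_mono abs_triangle_ineq)

lemma l1_pos:
  fixes x :: "real ^ 'n::finite"
  assumes "x \<noteq> 0"
  shows "0 < l1 x"
proof -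
  obtain i where i: "x $ i \<noteq> 0" using assms by (metis vec_eq_iff zero_index)
  then have "\<bar>x $ i\<bar> \<le> l1 x" unfolding l1_def by (intro member_le_sum) auto
  with i show ?thesis by simp
qed

lemma sum_vector_matrix_stochastic:
  fixes M :: "real ^ 'n::finite ^ 'n"
  assumes "row_stochastic M"
  shows "(\<Sum>j\<in>UNIV. (x v* M) $ j) = (\<Sum>i\<in>UNIV. x $ i)"
proof -
  have "(\<Sum>j\<in>UNIV. (x v* M) $ j) = (\<Sum>j\<in>UNIV. \<Sum>i\<in>UNIV. x $ i * M $ i $ j)"
    by (simp add: vector_matrix_mult_def mult.commute)
  also have "\<dots> = (\<Sum>i\<in>UNIV. x $ i * (\<Sum>j\<in>UNIV. M $ i $ j))"
    by (subst sum.swap) (simp add: sum_distrib_left)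
  also have "\<dots> = (\<Sum>i\<in>UNIV. x $ i)" using assms unfolding row_stochastic_def by simp
  finally show ?thesis .
qed

lemma l1_vector_matrix_stochastic:
  fixes M :: "real ^ 'n::finite ^ 'n"
  assumes "row_stochastic M"
  shows "l1 (x v* M) \<le> l1 x"
proof -
  have "l1 (x v* M) = (\<Sum>j\<in>UNIV. \<bar>\<Sum>i\<in>UNIV. M $ i $ j * x $ i\<bar>)"
    unfolding l1_def vector_matrix_mult_def by (simp add: mult.commute)
  also have "\<dots> \<le> (\<Sum>j\<in>UNIV. \<Sum>i\<in>UNIV. M $ i $ j * \<bar>x $ i\<bar>)"
    using assms unfolding row_stochastic_def
    by (intro sum_mono order_trans[OF sum_abs]) (simp add: abs_mult)
  also have "\<dots> = (\<Sum>i\<in>UNIV. \<bar>x $ i\<bar> * (\<Sum>j\<in>UNIV. M $ i $ j))"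
    by (subst sum.swap) (simp add: sum_distrib_left mult.commute)
  also have "\<dots> = l1 x" using assms unfolding row_stochastic_def l1_def by simp
  finally show ?thesis .
qed

lemma row_stochastic_mult:
  fixes A B :: "real ^ 'n::finite ^ 'n"
  assumes A: "row_stochastic A" and B: "row_stochastic B"
  shows "row_stochastic (A ** B)"
proof -
  have "(\<Sum>j\<in>UNIV. (A ** B) $ i $ j) = 1" for i
  proof -
    have "(\<Sum>j\<in>UNIV. (A ** B) $ i $ j) = (\<Sum>j\<in>UNIV. (A $ i v* B) $ j)"
      by (simp add: matrix_matrix_mult_def vector_matrix_mult_def mult.commute)
    also have "\<dots> = (\<Sum>k\<in>UNIV. A $ i $ k)" by (rule sum_vector_matrix_stochastic[OF B])
    finally show ?thesis using A unfolding row_stochastic_def by simp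
  qed
  moreover have "0 \<le> (A ** B) $ i $ j" for i j
    using A B unfolding row_stochastic_def matrix_matrix_mult_def
    by (simp add: sum_nonneg)
  ultimately show ?thesis unfolding row_stochastic_def by blast
qed

lemma row_stochastic_mat_prod:
  assumes "\<And>k. 1 \<le> k \<Longrightarrow> k \<le> n \<Longrightarrow> row_stochastic (M k)"
  shows "row_stochastic (mat_prod M n)"
  using assms
proof (induction n)
  case 0
  have "(\<Sum>j\<in>UNIV. (mat 1 :: real ^ 'a ^ 'a) $ i $ j) = 1" for i
    by (simp add: mat_def)
  then show ?case unfolding row_stochastic_def by (simp add: mat_def)
next
  case (Suc n)
  then show ?case by (simp add: row_stochastic_mult)
qed

text \<open>The stochasticity
  of \<open>M\<close> is what makes the defining supremum bounded.\<close>
lemma l1_contraction: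
  fixes M :: "real ^ 'n::finite ^ 'n"
  assumes M: "row_stochastic M" and norm: "contr_norm M \<le> lam"
    and zero_sum: "(\<Sum>i\<in>UNIV. x $ i) = 0"
  shows "l1 (x v* M) \<le> lam * l1 x"
proof (cases "x = 0")
  case True
  then show ?thesis by (simp add: l1_def)
next
  case False
  let ?R = "{l1 (z v* M) / l1 z | z. z \<noteq> 0 \<and> (\<Sum>i\<in>UNIV. z $ i) = 0}"
  have "bdd_above ?R"
  proof (rule bdd_aboveI)
    fix r assume "r \<in> ?R"
    then obtain z where "r = l1 (z v* M) / l1 z" "z \<noteq> 0" by blast
    then show "r \<le> 1"
      using l1_vector_matrix_stochastic[OF M, of z] l1_pos[of z] by simp
  qed
  moreover have "l1 (x v* M) / l1 x \<in> ?R" using False zero_sum by blast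
  ultimately have "l1 (x v* M) / l1 x \<le> contr_norm M"
    unfolding contr_norm_def by (intro cSup_upper)
  then have "l1 (x v* M) / l1 x \<le> lam" using norm by linarith
  with l1_pos[OF False] show ?thesis by (simp add: divide_le_eq mult.commute)
qed

lemma zero_sum_partial_sum_lower:
  fixes y :: "real ^ 'n::finite"
  assumes "(\<Sum>i\<in>UNIV. y $ i) = 0"
  shows "- l1 y / 2 \<le> (\<Sum>i\<in>S. y $ i)"
proof -
  have "(\<Sum>i\<in>UNIV. y $ i) = (\<Sum>i\<in>S. y $ i) + (\<Sum>i\<in>UNIV - S. y $ i)"
    using sum.Int_Diff[of UNIV "\<lambda>i. y $ i" S] by simp
  moreover have "l1 y = (\<Sum>i\<in>S. \<bar>y $ i\<bar>) + (\<Sum>i\<in>UNIV - S. \<bar>y $ i\<bar>)"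
    unfolding l1_def using sum.Int_Diff[of UNIV "\<lambda>i. \<bar>y $ i\<bar>" S] by simp
  moreover have "- (\<Sum>i\<in>S. \<bar>y $ i\<bar>) \<le> (\<Sum>i\<in>S. y $ i)"
    using sum_mono[of S "\<lambda>i. - \<bar>y $ i\<bar>" "\<lambda>i. y $ i"] by (simp add: sum_negf)
  moreover have "(\<Sum>i\<in>UNIV - S. y $ i) \<le> (\<Sum>i\<in>UNIV - S. \<bar>y $ i\<bar>)"
    by (rule sum_mono) simp
  ultimately show ?thesis using assms by linarith
qed

text \<open>\<open>error_vec N dv n\<close> is the common row of \<open>Mhat\<^sub>1\<cdots>Mhat\<^sub>n - N\<^sub>1\<cdots>N\<^sub>n\<close>.\<close>
fun error_vec :: "(nat \<Rightarrow> real ^ 'n::finite ^ 'n) \<Rightarrow> real ^ 'n \<Rightarrow> nat \<Rightarrow> real ^ 'n" where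
  "error_vec N dv 0 = 0"
| "error_vec N dv (Suc n) = error_vec N dv n v* N (Suc n) + dv"

text \<open>Every row of the difference of the perturbed and unperturbed products is the
  error vector; this uses that the perturbed prefix products have unit row sums.\<close>
lemma mat_prod_difference_rows:
  fixes N Mhat :: "nat \<Rightarrow> real ^ 'n::finite ^ 'n"
  assumes Mhat: "\<And>k. 1 \<le> k \<Longrightarrow> k \<le> n \<Longrightarrow> Mhat k = (\<chi> i j. N k $ i $ j + dv $ j)"
    and stoch: "\<And>k. 1 \<le> k \<Longrightarrow> k \<le> n \<Longrightarrow> row_stochastic (Mhat k)"
  shows "(mat_prod Mhat n - mat_prod N n) $ i $ j = error_vec N dv n $ j"
  using assms
proof (induction n arbitrary: i j)
  case 0
  then show ?case by (simp add: mat_def)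
next
  case (Suc n)
  let ?A = "mat_prod Mhat n" and ?B = "mat_prod N n" and ?N = "N (Suc n)"
  have IH: "?A $ i $ k - ?B $ i $ k = error_vec N dv n $ k" for k
    using Suc by simp
  have rows: "(\<Sum>k\<in>UNIV. ?A $ i $ k) = 1"
    using row_stochastic_mat_prod[of n Mhat] Suc.prems(2) unfolding row_stochastic_def by simp
  have "(mat_prod Mhat (Suc n) - mat_prod N (Suc n)) $ i $ j
      = (\<Sum>k\<in>UNIV. ?A $ i $ k * (?N $ k $ j + dv $ j)) - (\<Sum>k\<in>UNIV. ?B $ i $ k * ?N $ k $ j)"
    using Suc.prems(1)[of "Suc n"] by (simp add: matrix_matrix_mult_def)
  also have "\<dots> = (\<Sum>k\<in>UNIV. (?A $ i $ k - ?B $ i $ k) * ?N $ k $ j)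
                 + (\<Sum>k\<in>UNIV. ?A $ i $ k) * dv $ j"
    by (simp add: algebra_simps sum.distrib sum_subtractf sum_distrib_left sum_distrib_right)
  also have "\<dots> = error_vec N dv (Suc n) $ j"
    by (simp add: IH rows vector_matrix_mult_def mult.commute)
  finally show ?case .
qed

lemma error_vec_zero_sum:
  assumes stoch: "\<And>k. 1 \<le> k \<Longrightarrow> k \<le> n \<Longrightarrow> row_stochastic (N k)"
    and dsum: "(\<Sum>s\<in>UNIV. dv $ s) = 0"
  shows "(\<Sum>s\<in>UNIV. error_vec N dv n $ s) = 0"
  using stoch
proof (induction n)
  case (Suc n)
  then show ?case
    by (simp add: sum.distrib dsum sum_vector_matrix_stochastic)
qed simp

lemma error_vec_l1_bound:
  fixes lam :: real
  assumes lam: "0 \<le> lam" "lam < 1"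
    and stoch: "\<And>k. 1 \<le> k \<Longrightarrow> k \<le> n \<Longrightarrow> row_stochastic (N k)"
    and norm: "\<And>k. 1 \<le> k \<Longrightarrow> k \<le> n \<Longrightarrow> contr_norm (N k) \<le> lam"
    and dsum: "(\<Sum>s\<in>UNIV. dv $ s) = 0"
  shows "l1 (error_vec N dv n) \<le> l1 dv / (1 - lam)"
  using stoch norm
proof (induction n)
  case 0
  show ?case using lam by (simp add: l1_def)
next
  case (Suc n)
  let ?e = "error_vec N dv n"
  have "l1 (?e v* N (Suc n)) \<le> lam * l1 ?e"
    using Suc.prems error_vec_zero_sum[of n N dv] dsum by (intro l1_contraction) auto
  also have "\<dots> \<le> lam * (l1 dv / (1 - lam))"
    using Suc lam by (intro mult_left_mono) auto
  finally have "l1 (error_vec N dv (Suc n)) \<le> lam * (l1 dv / (1 - lam)) + l1 dv"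
    using l1_triangle[of "?e v* N (Suc n)" dv] by simp
  also have "\<dots> = l1 dv / (1 - lam)" using lam by (simp add: field_simps)
  finally show ?case .
qed

lemma error_vec_partial_sum_lower:
  fixes lam :: real
  assumes lam: "0 \<le> lam" "lam < 1"
    and stoch: "\<And>k. 1 \<le> k \<Longrightarrow> k \<le> Suc n \<Longrightarrow> row_stochastic (N k)"
    and norm: "\<And>k. 1 \<le> k \<Longrightarrow> k \<le> Suc n \<Longrightarrow> contr_norm (N k) \<le> lam"
    and dsum: "(\<Sum>s\<in>UNIV. dv $ s) = 0"
  shows "(\<Sum>s\<in>S. dv $ s) - lam * l1 dv / (2 * (1 - lam))
           \<le> (\<Sum>s\<in>S. error_vec N dv (Suc n) $ s)"
proof -
  let ?y = "error_vec N dv n v* N (Suc n)"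
  have e_sum: "(\<Sum>s\<in>UNIV. error_vec N dv n $ s) = 0"
    using stoch dsum by (intro error_vec_zero_sum) auto
  have "l1 ?y \<le> lam * l1 (error_vec N dv n)"
    using stoch norm e_sum by (intro l1_contraction) auto
  also have "\<dots> \<le> lam * (l1 dv / (1 - lam))"
    using lam stoch norm dsum by (intro mult_left_mono error_vec_l1_bound) auto
  finally have "- (lam * l1 dv / (2 * (1 - lam))) \<le> - l1 ?y / 2"
    using lam by (simp add: field_simps)
  also have "\<dots> \<le> (\<Sum>s\<in>S. ?y $ s)"
    using stoch e_sum by (intro zero_sum_partial_sum_lower) (simp add: sum_vector_matrix_stochastic)
  finally show ?thesis by (simp add: sum.distrib)
qed

theorem mainTheorem10:
  fixes N Mhat :: "nat \<Rightarrow> real ^ ('a::finite \<times> 'a) ^ ('a \<times> 'a)"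
    and dv :: "real ^ ('a \<times> 'a)"
    and lam \<delta> :: real and t :: nat and Sstar :: "('a \<times> 'a) set"
  assumes t: "t \<ge> 1"
    and lam: "0 < lam" "lam < 1"
    and Nstoch: "\<And>k. 1 \<le> k \<Longrightarrow> k \<le> t \<Longrightarrow> row_stochastic (N k)"
    and Nnorm: "\<And>k. 1 \<le> k \<Longrightarrow> k \<le> t \<Longrightarrow> contr_norm (N k) \<le> lam"
    and dsum: "(\<Sum>s\<in>UNIV. dv $ s) = 0"
    and dpos: "\<delta> > 0"
    and dl1: "l1 dv = 2 * \<delta>"
    and dS: "(\<Sum>s\<in>Sstar. dv $ s) = \<delta>"
    and Mhat_def: "\<And>k. 1 \<le> k \<Longrightarrow> k \<le> t \<Longrightarrow> Mhat k = (\<chi> i j. N k $ i $ j + dv $ j)"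
    and Mhat_stoch: "\<And>k. 1 \<le> k \<Longrightarrow> k \<le> t \<Longrightarrow> row_stochastic (Mhat k)"
  shows "(\<forall>i i' j. (mat_prod Mhat t - mat_prod N t) $ i $ j = (mat_prod Mhat t - mat_prod N t) $ i' $ j)
       \<and> (\<forall>i. (\<Sum>j\<in>Sstar. (mat_prod Mhat t - mat_prod N t) $ i $ j) \<ge> (1 - lam / (1 - lam)) * \<delta>)"
proof -
  have rows: "(mat_prod Mhat t - mat_prod N t) $ i $ j = error_vec N dv t $ j" for i j
    using Mhat_def Mhat_stoch by (rule mat_prod_difference_rows)
  obtain n where n: "t = Suc n" using t by (cases t) auto
  have "\<delta> - lam * (2 * \<delta>) / (2 * (1 - lam)) \<le> (\<Sum>j\<in>Sstar. error_vec N dv t $ j)"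
    using error_vec_partial_sum_lower[of lam n N dv Sstar] lam Nstoch Nnorm dsum dS dl1
    by (simp add: n)
  moreover have "\<delta> - lam * (2 * \<delta>) / (2 * (1 - lam)) = (1 - lam / (1 - lam)) * \<delta>"
    using lam by (simp add: field_simps)
  ultimately show ?thesis unfolding rows by simp
qed

end
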